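(* Let $n$ be even, let $r\le s\le 2r-1$, and let $m=s-r+1$. Then $$\nu(n,P^{(r)}_s)\ge 2h(n,r,m)+h(n,r-1,m).$$
   Context: $K^{(r)}_n$ denotes the ordered complete $r$-uniform hypergraph on vertex set $[n]=\{1,\dots,n\}$ (natural order), whose edges are all $r$-subsets of $[n]$. A copy of an ordered hypergraph $H$ in $K^{(r)}_n$ is the image of $H$ under an order-preserving injection $V(H)\to[n]$. The natural (tight) path $P^{(r)}_s$ has vertices $v_1<\dots<v_s$ and its edges are all sets of $r$ consecutive vertices $\{v_j,\dots,v_{j+r-1}\}$, $1\le j\le s-r+1$. For an ordered $r$-uniform $H$, $\nu(n,H)$ is the maximum number of copies of $H$ in $K^{(r)}_n$ that are pairwise edge-disjoint. An interval partition $(X,Y,Z)$ of $[n]$ consists of consecutive (possibly empty) intervals $X<Y<Z$ with union $[n]$. A set $S\subseteq[n]$ is $m$-left-biased if there is an interval partition $(X,Y,Z)$ of $[n]$ with $|X|=|Z|$, $|X\cap S|=m$ and $|Z\cap S|=0$. $h(n,t,m)$ denotes the number of $t$-subsets of $[n]$ that are $m$-left-biased. *)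

theory Defs
  imports Main
begin

text \<open>An ordered hypergraph H is given by its number of vertices k (vertex set
  {0..<k}, natural order) and its edge set E.  A copy of H in the ordered complete
  r-uniform hypergraph on [n] = {1..n} is the image of H under an order-preserving
  injection {0..<k} \<rightarrow> [n]; we record a copy by its edge set.\<close>

definition copies :: "nat \<Rightarrow> nat \<Rightarrow> nat set set \<Rightarrow> nat set set set" where
  "copies n k E = {(\<lambda>e. f ` e) ` E | f. strict_mono_on {0..<k} f \<and> f ` {0..<k} \<subseteq> {1..n}}"

definition nu :: "nat \<Rightarrow> nat \<Rightarrow> nat set set \<Rightarrow> nat" where
  "nu n k E = Max {card C | C. C \<subseteq> copies n k E \<and> pairwise disjnt C}"

definition path_edges :: "nat \<Rightarrow> nat \<Rightarrow> nat set set" where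
  "path_edges r s = {{j..<j + r} | j. j + r \<le> s}"

definition left_biased :: "nat \<Rightarrow> nat \<Rightarrow> nat set \<Rightarrow> bool" where
  "left_biased n m S \<longleftrightarrow> (\<exists>a b. a \<le> b \<and> b \<le> n \<and> card {1..a} = card {b+1..n}
      \<and> card ({1..a} \<inter> S) = m \<and> {b+1..n} \<inter> S = {})"

definition h :: "nat \<Rightarrow> nat \<Rightarrow> nat \<Rightarrow> nat" where
  "h n t m = card {S. S \<subseteq> {1..n} \<and> card S = t \<and> left_biased n m S}"

end

theory Submission
  imports Defs
begin

(*
  Let S = {x_0 < ... < x_(k-1)} be m-left-biased with pivot a = x_(m-1); left-biasedness
  gives a + x_(k-1) <= n.  For k = r, the path on x_0, ..., x_(r-1), x_0 + c, ..., x_(m-2) + c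
  with c = n + 1 - a is a copy of P_s, and so is its mirror image under z |-> n + 1 - z; for
  k = r - 1, so is the path on x_0, ..., x_(r-2), x_0 + c', ..., x_(m-1) + c' with
  c' = n + 1 - x_0 - a.  In every edge of these copies the unshifted vertices lie in [1, n - a]
  and the shifted ones in [n + 1 - a, n].  Count the vertices of an edge among the t smallest
  and the t largest points of [n]: the least t for which this count reaches m is exactly a, the
  count at a is m + 1 for the third kind of copy and m otherwise, and a lies in the edge for the
  first kind but not for its mirror image.  Undoing the shift above n - a then returns S.  So
  every edge determines the copy it lies in, and the 2 h(n,r,m) + h(n,r-1,m) copies are
  pairwise edge-disjoint.
*)

definition sorted_enum :: "nat set \<Rightarrow> nat \<Rightarrow> nat" where
  "sorted_enum S q = sorted_list_of_set S ! q"

lemma strict_mono_sorted_enum: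
  assumes "finite S"
  shows "strict_mono_on {0..<card S} (sorted_enum S)"
  using assms sorted_wrt_iff_nth_less[of "(<)" "sorted_list_of_set S"]
  by (auto simp: strict_mono_on_def sorted_enum_def)

lemma sorted_enum_image:
  assumes "finite S"
  shows "sorted_enum S ` {0..<card S} = S"
proof -
  have "sorted_enum S ` {0..<card S} = set (sorted_list_of_set S)"
    using assms by (auto simp: sorted_enum_def set_conv_nth)
  then show ?thesis using assms by simp
qed

lemma card_image_strict_mono:
  fixes x :: "nat \<Rightarrow> nat"
  assumes "strict_mono_on {0..<k} x" "B \<subseteq> {0..<k}"
  shows "card (x ` B) = card B"
  using strict_mono_on_imp_inj_on[OF assms(1)] assms(2) by (metis card_image inj_on_subset)

lemma strict_mono_on_shift:
  fixes x :: "nat \<Rightarrow> nat"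
  shows "strict_mono_on A x \<Longrightarrow> strict_mono_on A (\<lambda>q. x q + c)"
  by (simp add: strict_mono_on_def)

lemma strict_mono_on_image_filter_le:
  fixes x :: "nat \<Rightarrow> nat"
  assumes "strict_mono_on {0..<k} x" "i < k"
  shows "{z \<in> x ` {j..<k}. z \<le> x i} = x ` {j..i}"
  using assms strict_mono_on_less_eq[OF assms(1)] by fastforce

lemma strict_mono_on_image_filter_less:
  fixes x :: "nat \<Rightarrow> nat"
  assumes "strict_mono_on {0..<k} x" "i < k"
  shows "{z \<in> x ` {j..<k}. z < x i} = x ` {j..<i}"
  using assms strict_mono_on_less[OF assms(1)] by fastforce

section \<open>Copies of the tight path\<close>

definition path_copy :: "nat \<Rightarrow> nat \<Rightarrow> (nat \<Rightarrow> nat) \<Rightarrow> nat set set" where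
  "path_copy r s f = (\<lambda>e. f ` e) ` path_edges r s"

lemma path_copy_in_copies:
  assumes "strict_mono_on {0..<s} f" "f ` {0..<s} \<subseteq> {1..n}"
  shows "path_copy r s f \<in> copies n s (path_edges r s)"
  using assms unfolding path_copy_def copies_def by blast

lemma path_copy_iff:
  "e \<in> path_copy r s f \<longleftrightarrow> (\<exists>j. j + r \<le> s \<and> e = f ` {j..<j + r})"
  unfolding path_copy_def path_edges_def by auto

lemma card_le_nu_if_decodable:
  fixes F :: "'i \<Rightarrow> nat set set"
  assumes "finite I" "E \<noteq> {}" and edges: "\<And>e. e \<in> E \<Longrightarrow> e \<subseteq> {0..<k}"
    and copy: "\<And>p. p \<in> I \<Longrightarrow> F p \<in> copies n k E"
    and decode: "\<And>p e. p \<in> I \<Longrightarrow> e \<in> F p \<Longrightarrow> g e = p"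
  shows "card I \<le> nu n k E"
proof -
  have "copies n k E \<subseteq> Pow (Pow {1..n})"
  proof
    fix C assume "C \<in> copies n k E"
    then obtain f where "C = (\<lambda>e. f ` e) ` E" "f ` {0..<k} \<subseteq> {1..n}"
      by (auto simp: copies_def)
    then show "C \<in> Pow (Pow {1..n})" using edges by blast
  qed
  then have "finite (copies n k E)" by (rule finite_subset) simp
  moreover have "{card C | C. C \<subseteq> copies n k E \<and> pairwise disjnt C} \<subseteq> card ` Pow (copies n k E)"
    by blast
  ultimately have finite_cards: "finite {card C | C. C \<subseteq> copies n k E \<and> pairwise disjnt C}"
    by (meson finite_Pow_iff finite_imageI finite_subset)
  have nonempty: "F p \<noteq> {}" if "p \<in> I" for p
    using copy[OF that] \<open>E \<noteq> {}\<close> by (auto simp: copies_def)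
  have "inj_on F I"
  proof (rule inj_onI)
    fix p q assume "p \<in> I" "q \<in> I" "F p = F q"
    moreover obtain e where "e \<in> F p" using nonempty[OF \<open>p \<in> I\<close>] by blast
    ultimately show "p = q" using decode by metis
  qed
  moreover have "pairwise disjnt (F ` I)"
    by (rule pairwise_imageI) (use decode in \<open>auto simp: disjnt_iff\<close>)
  ultimately have "card I \<in> {card C | C. C \<subseteq> copies n k E \<and> pairwise disjnt C}"
    using copy by (auto simp: card_image intro!: exI[of _ "F ` I"])
  then show ?thesis
    unfolding nu_def using finite_cards by (rule Max_ge[rotated])
qed

definition reflect :: "nat \<Rightarrow> nat \<Rightarrow> nat" where
  "reflect n z = n + 1 - z"

lemma reflect_reflect:
  assumes "z \<le> n + 1"
  shows "reflect n (reflect n z) = z"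
  using assms by (simp add: reflect_def)

definition mirror :: "nat \<Rightarrow> nat \<Rightarrow> (nat \<Rightarrow> nat) \<Rightarrow> nat \<Rightarrow> nat" where
  "mirror n s f = reflect n \<circ> f \<circ> (\<lambda>p. s - 1 - p)"

lemma path_edges_reverse:
  "(\<lambda>e. (\<lambda>p. s - 1 - p) ` e) ` path_edges r s = path_edges r s"
proof -
  have rev: "(\<lambda>p. s - 1 - p) ` {j..<j + r} = {s - r - j..<s - r - j + r}" if "j + r \<le> s" for j
  proof
    show "(\<lambda>p. s - 1 - p) ` {j..<j + r} \<subseteq> {s - r - j..<s - r - j + r}"
      using that by auto
    show "{s - r - j..<s - r - j + r} \<subseteq> (\<lambda>p. s - 1 - p) ` {j..<j + r}"
    proof
      fix q assume "q \<in> {s - r - j..<s - r - j + r}"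
      then show "q \<in> (\<lambda>p. s - 1 - p) ` {j..<j + r}"
        using that by (intro image_eqI[of _ _ "s - 1 - q"]) auto
    qed
  qed
  show ?thesis
  proof (rule equalityI)
    show "(\<lambda>e. (\<lambda>p. s - 1 - p) ` e) ` path_edges r s \<subseteq> path_edges r s"
      using rev unfolding path_edges_def by fastforce
    show "path_edges r s \<subseteq> (\<lambda>e. (\<lambda>p. s - 1 - p) ` e) ` path_edges r s"
    proof
      fix e assume "e \<in> path_edges r s"
      then obtain j where j: "j + r \<le> s" "e = {j..<j + r}" by (auto simp: path_edges_def)
      then have "e = (\<lambda>p. s - 1 - p) ` {s - r - j..<s - r - j + r}"
        using rev[of "s - r - j"] by (simp add: add.commute)
      moreover have "{s - r - j..<s - r - j + r} \<in> path_edges r s"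
        using j unfolding path_edges_def by (intro CollectI exI[of _ "s - r - j"]) auto
      ultimately show "e \<in> (\<lambda>e. (\<lambda>p. s - 1 - p) ` e) ` path_edges r s" by blast
    qed
  qed
qed

lemma path_copy_mirror:
  "path_copy r s (mirror n s f) = (\<lambda>e. reflect n ` e) ` path_copy r s f"
proof -
  have "path_copy r s (mirror n s f)
      = (\<lambda>e. reflect n ` f ` e) ` (\<lambda>e. (\<lambda>p. s - 1 - p) ` e) ` path_edges r s"
    unfolding path_copy_def mirror_def image_image image_comp by simp
  then show ?thesis unfolding path_edges_reverse path_copy_def image_image .
qed

lemma mirror_embedding:
  assumes "strict_mono_on {0..<s} f" "f ` {0..<s} \<subseteq> {1..n}"
  shows "strict_mono_on {0..<s} (mirror n s f)" "mirror n s f ` {0..<s} \<subseteq> {1..n}"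
proof -
  have f_le: "f p \<le> n" if "p < s" for p using assms(2) that by fastforce
  show "strict_mono_on {0..<s} (mirror n s f)"
  proof (rule strict_mono_onI)
    fix p q assume "p \<in> {0..<s}" "q \<in> {0..<s}" "p < q"
    then have "f (s - 1 - q) < f (s - 1 - p)" "f (s - 1 - p) \<le> n"
      by (auto intro!: strict_mono_onD[OF assms(1)] f_le)
    then show "mirror n s f p < mirror n s f q" by (simp add: mirror_def reflect_def)
  qed
  show "mirror n s f ` {0..<s} \<subseteq> {1..n}"
  proof (rule image_subsetI)
    fix p assume "p \<in> {0..<s}"
    then have "s - 1 - p \<in> {0..<s}" by auto
    then have "f (s - 1 - p) \<in> {1..n}" using assms(2) by blast
    then show "mirror n s f p \<in> {1..n}" by (auto simp: mirror_def reflect_def)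
  qed
qed

definition wrap :: "(nat \<Rightarrow> nat) \<Rightarrow> nat \<Rightarrow> nat \<Rightarrow> nat \<Rightarrow> nat" where
  "wrap x k c p = (if p < k then x p else x (p - k) + c)"

lemma strict_mono_wrap:
  fixes x :: "nat \<Rightarrow> nat"
  assumes x: "strict_mono_on {0..<k} x" and "l \<le> k" and c: "x (k - 1) < x 0 + c"
  shows "strict_mono_on {0..<k + l} (wrap x k c)"
proof (rule strict_mono_onI)
  fix p q assume p: "p \<in> {0..<k + l}" and q: "q \<in> {0..<k + l}" and "p < q"
  consider "q < k" | "p < k" "k \<le> q" | "k \<le> p"
    by linarith
  then show "wrap x k c p < wrap x k c q"
  proof cases
    case 1
    then have "x p < x q" using \<open>p < q\<close> by (intro strict_mono_onD[OF x]) auto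
    then show ?thesis using 1 \<open>p < q\<close> by (simp add: wrap_def)
  next
    case 2
    have "x p \<le> x (k - 1)" using 2 by (intro strict_mono_on_leD[OF x]) auto
    moreover have "x 0 \<le> x (q - k)" using 2 q \<open>l \<le> k\<close> by (intro strict_mono_on_leD[OF x]) auto
    ultimately show ?thesis using 2 c by (simp add: wrap_def)
  next
    case 3
    then have "x (p - k) < x (q - k)"
      using q \<open>p < q\<close> \<open>l \<le> k\<close> by (intro strict_mono_onD[OF x]) auto
    then show ?thesis using 3 \<open>p < q\<close> by (simp add: wrap_def)
  qed
qed

lemma wrap_window:
  assumes "j \<le> k" "k \<le> j + r"
  shows "wrap x k c ` {j..<j + r} = x ` {j..<k} \<union> (\<lambda>q. x q + c) ` {0..<j + r - k}"
proof
  show "wrap x k c ` {j..<j + r} \<subseteq> x ` {j..<k} \<union> (\<lambda>q. x q + c) ` {0..<j + r - k}"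
    by (auto simp: wrap_def)
  show "x ` {j..<k} \<union> (\<lambda>q. x q + c) ` {0..<j + r - k} \<subseteq> wrap x k c ` {j..<j + r}"
  proof (intro Un_least image_subsetI)
    fix q assume "q \<in> {j..<k}"
    then show "x q \<in> wrap x k c ` {j..<j + r}"
      using assms by (intro image_eqI[of _ _ q]) (auto simp: wrap_def)
  next
    fix q assume "q \<in> {0..<j + r - k}"
    then show "x q + c \<in> wrap x k c ` {j..<j + r}"
      using assms by (intro image_eqI[of _ _ "q + k"]) (auto simp: wrap_def)
  qed
qed

definition long_embedding :: "nat \<Rightarrow> nat \<Rightarrow> nat \<Rightarrow> (nat \<Rightarrow> nat) \<Rightarrow> nat \<Rightarrow> nat" where
  "long_embedding n k m x = wrap x k (n + 1 - x (m - 1))"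

definition short_embedding :: "nat \<Rightarrow> nat \<Rightarrow> nat \<Rightarrow> (nat \<Rightarrow> nat) \<Rightarrow> nat \<Rightarrow> nat" where
  "short_embedding n k m x = wrap x k (n + 1 - x 0 - x (m - 1))"

section \<open>Decoding an edge\<close>

definition boundary_count :: "nat \<Rightarrow> nat set \<Rightarrow> nat \<Rightarrow> nat" where
  "boundary_count n e t = card {z \<in> e. z \<le> t \<or> n < z + t}"

lemma boundary_count_mono:
  assumes "finite e" "t \<le> t'"
  shows "boundary_count n e t \<le> boundary_count n e t'"
  unfolding boundary_count_def using assms by (intro card_mono) auto

lemma boundary_count_reflect:
  assumes "e \<subseteq> {1..n}"
  shows "boundary_count n (reflect n ` e) t = boundary_count n e t"
proof -
  have "{z \<in> reflect n ` e. z \<le> t \<or> n < z + t} = reflect n ` {z \<in> e. z \<le> t \<or> n < z + t}"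
    using assms by (auto simp: reflect_def)
  moreover have "inj_on (reflect n) e"
    using assms by (intro inj_on_inverseI[of _ "reflect n"] reflect_reflect) auto
  ultimately show ?thesis
    unfolding boundary_count_def by (simp add: card_image inj_on_subset)
qed

definition threshold :: "nat \<Rightarrow> nat \<Rightarrow> nat set \<Rightarrow> nat" where
  "threshold n m e = (LEAST t. m \<le> boundary_count n e t)"

lemma threshold_eqI:
  assumes "finite e" "m \<le> boundary_count n e a" "boundary_count n e (a - 1) < m"
  shows "threshold n m e = a"
  unfolding threshold_def
proof (rule Least_equality)
  show "m \<le> boundary_count n e a" by fact
  fix t assume "m \<le> boundary_count n e t"
  show "a \<le> t"
  proof (rule ccontr)
    assume "\<not> a \<le> t"
    then have "boundary_count n e t \<le> boundary_count n e (a - 1)"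
      using assms(1) by (intro boundary_count_mono) auto
    then show False using \<open>m \<le> boundary_count n e t\<close> assms(3) by linarith
  qed
qed

lemma boundary_count_split:
  assumes "finite A" "finite H" "A \<subseteq> {..n - a}" "H \<subseteq> {n - a<..}" "t \<le> a" "a \<le> n - a"
  shows "boundary_count n (A \<union> H) t = card {z \<in> A. z \<le> t} + card {z \<in> H. n < z + t}"
proof -
  have low: "\<not> n < z + t" if "z \<in> A" for z using assms(3,5,6) that by auto
  have high: "\<not> z \<le> t" if "z \<in> H" for z using assms(4,5,6) that by auto
  have "{z \<in> A \<union> H. z \<le> t \<or> n < z + t} = {z \<in> A. z \<le> t} \<union> {z \<in> H. n < z + t}"
    using low high by blast
  moreover have "{z \<in> A. z \<le> t} \<inter> {z \<in> H. n < z + t} = {}"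
    using high by blast
  ultimately show ?thesis
    unfolding boundary_count_def using assms(1,2) by (simp add: card_Un_disjoint)
qed

definition unwrap :: "nat \<Rightarrow> nat \<Rightarrow> nat \<Rightarrow> nat set \<Rightarrow> nat set" where
  "unwrap n a d e = {z \<in> e. z \<le> n - a} \<union> (\<lambda>z. z - d) ` {z \<in> e. n - a < z}"

lemma unwrap_split:
  assumes "A \<subseteq> {..n - a}" "H \<subseteq> {n - a<..}"
  shows "unwrap n a d (A \<union> H) = A \<union> (\<lambda>z. z - d) ` H"
proof -
  have "{z \<in> A \<union> H. z \<le> n - a} = A" "{z \<in> A \<union> H. n - a < z} = H"
    using assms by auto
  then show ?thesis unfolding unwrap_def by simp
qed

datatype copy_kind = Plain | Mirrored | Short

text \<open>In an edge of a short copy the least vertex x_j and the greatest x_j + c' come from the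
  same index, so Max e - Min e is the shift c'.\<close>

definition decode :: "nat \<Rightarrow> nat \<Rightarrow> nat set \<Rightarrow> copy_kind \<times> nat set" where
  "decode n m e =
    (let a = threshold n m e in
     if m < boundary_count n e a then (Short, unwrap n a (Max e - Min e) e)
     else if a \<in> e then (Plain, unwrap n a (n + 1 - a) e)
     else (Mirrored, unwrap n a (n + 1 - a) (reflect n ` e)))"

lemma decode_reflect:
  assumes "e \<subseteq> {1..n}" "threshold n m e = a" "boundary_count n e a = m" "n + 1 - a \<notin> e"
  shows "decode n m (reflect n ` e) = (Mirrored, unwrap n a (n + 1 - a) e)"
proof -
  have "boundary_count n (reflect n ` e) = boundary_count n e"
    using boundary_count_reflect[OF assms(1)] by blast
  then have "threshold n m (reflect n ` e) = a"
    using assms(2) by (simp add: threshold_def)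
  moreover have "a \<notin> reflect n ` e"
    using assms(1,4) by (auto simp: reflect_def)
  moreover have "reflect n ` reflect n ` e = e"
    using assms(1) by (force simp: image_image reflect_reflect)
  ultimately show ?thesis
    using assms(3) \<open>boundary_count n (reflect n ` e) = boundary_count n e\<close>
    by (simp add: decode_def Let_def)
qed

section \<open>The copies attached to a left-biased set\<close>

locale biased_enum =
  fixes n k m :: nat and x :: "nat \<Rightarrow> nat"
  assumes strict_mono: "strict_mono_on {0..<k} x"
    and range: "x ` {0..<k} \<subseteq> {1..n}"
    and m_pos: "1 \<le> m" and m_le: "m \<le> k"
    and fits: "x (m - 1) + x (k - 1) \<le> n"
begin

abbreviation pivot :: nat where
  "pivot \<equiv> x (m - 1)"

lemma enum_bounds:
  assumes "q < k"
  shows "1 \<le> x q" "x q \<le> n - pivot"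
proof -
  show "1 \<le> x q" using range assms by fastforce
  have "x q \<le> x (k - 1)" using assms by (intro strict_mono_on_leD[OF strict_mono]) auto
  then show "x q \<le> n - pivot" using fits by linarith
qed

lemma pivot_bounds: "1 \<le> pivot" "pivot \<le> n - pivot"
  using enum_bounds[of "m - 1"] m_pos m_le by auto

lemma enum_le_pivot: "q < m \<Longrightarrow> x q \<le> pivot"
  using m_le by (intro strict_mono_on_leD[OF strict_mono]) auto

lemma enum_less_pivot: "q < m - 1 \<Longrightarrow> x q < pivot"
  using m_le by (intro strict_mono_onD[OF strict_mono]) auto

lemma enum_image_split:
  assumes "j \<le> i" "i \<le> k"
  shows "x ` {j..<k} \<union> x ` {0..<i} = x ` {0..<k}"
proof -
  have "{j..<k} \<union> {0..<i} = {0..<k}" using assms by auto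
  then show ?thesis by (metis image_Un)
qed

lemma card_enum_le_pivot:
  assumes "j \<le> m"
  shows "card {z \<in> x ` {j..<k}. z \<le> pivot} = m - j"
proof -
  have "{z \<in> x ` {j..<k}. z \<le> pivot} = x ` {j..m - 1}"
    using m_pos m_le by (intro strict_mono_on_image_filter_le[OF strict_mono]) auto
  moreover have "card (x ` {j..m - 1}) = m - j"
    using m_pos m_le assms by (subst card_image_strict_mono[OF strict_mono]) auto
  ultimately show ?thesis by simp
qed

lemma card_enum_below_pivot:
  assumes "j \<le> m - 1"
  shows "card {z \<in> x ` {j..<k}. z \<le> pivot - 1} = m - 1 - j"
proof -
  have "{z \<in> x ` {j..<k}. z \<le> pivot - 1} = {z \<in> x ` {j..<k}. z < pivot}"
    using pivot_bounds by auto
  also have "\<dots> = x ` {j..<m - 1}"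
    using m_pos m_le by (intro strict_mono_on_image_filter_less[OF strict_mono]) auto
  moreover have "card (x ` {j..<m - 1}) = m - 1 - j"
    using m_le by (subst card_image_strict_mono[OF strict_mono]) auto
  ultimately show ?thesis by simp
qed

lemma long_shift_bounds:
  assumes "q < m - 1"
  shows "n + 1 - pivot < x q + (n + 1 - pivot)" "x q + (n + 1 - pivot) \<le> n"
proof -
  have "q < k" using assms m_le by simp
  then have "1 \<le> x q" "x q < pivot" using assms enum_bounds(1) enum_less_pivot by auto
  then show "n + 1 - pivot < x q + (n + 1 - pivot)" "x q + (n + 1 - pivot) \<le> n"
    using pivot_bounds by auto
qed

lemma short_shift_bounds:
  assumes "q < m"
  defines "c \<equiv> n + 1 - x 0 - pivot"
  shows "x 0 + c = n + 1 - pivot" "n + 1 - pivot \<le> x q + c" "x q + c \<le> n"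
    "0 < q \<Longrightarrow> n + 1 - pivot < x q + c"
proof -
  have "1 \<le> x 0" "x 0 \<le> x q" "x q \<le> pivot"
    using assms m_le enum_bounds(1)[of 0] enum_le_pivot[of q]
    by (auto intro: strict_mono_on_leD[OF strict_mono])
  then show "x 0 + c = n + 1 - pivot" "n + 1 - pivot \<le> x q + c" "x q + c \<le> n"
    using pivot_bounds by (auto simp: c_def)
  assume "0 < q"
  then have "x 0 < x q" using assms m_le by (intro strict_mono_onD[OF strict_mono]) auto
  then show "n + 1 - pivot < x q + c" using \<open>x q \<le> pivot\<close> pivot_bounds by (auto simp: c_def)
qed

lemma boundary_count_edge:
  assumes "finite H" "H \<subseteq> {n - pivot<..}" "t \<le> pivot"
  shows "boundary_count n (x ` {j..<k} \<union> H) t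
    = card {z \<in> x ` {j..<k}. z \<le> t} + card {z \<in> H. n < z + t}"
  using assms pivot_bounds enum_bounds(2) by (intro boundary_count_split) auto

lemma unwrap_edge:
  assumes "\<And>q. q < l \<Longrightarrow> n - pivot < x q + c"
  shows "unwrap n pivot c (x ` {j..<k} \<union> (\<lambda>q. x q + c) ` {0..<l}) = x ` {j..<k} \<union> x ` {0..<l}"
proof -
  have "x ` {j..<k} \<subseteq> {..n - pivot}" "(\<lambda>q. x q + c) ` {0..<l} \<subseteq> {n - pivot<..}"
    using assms enum_bounds(2) by auto
  then show ?thesis by (simp add: unwrap_split image_image)
qed

lemma long_edge:
  assumes j: "j < m"
  defines "e \<equiv> x ` {j..<k} \<union> (\<lambda>q. x q + (n + 1 - pivot)) ` {0..<j}"
  shows "threshold n m e = pivot" "boundary_count n e pivot = m"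
    "pivot \<in> e" "n + 1 - pivot \<notin> e" "e \<subseteq> {1..n}"
proof -
  define H where "H = (\<lambda>q. x q + (n + 1 - pivot)) ` {0..<j}"
  have H: "n + 1 - pivot < z \<and> z \<le> n" if "z \<in> H" for z
    using that j long_shift_bounds by (auto simp: H_def)
  then have "H \<subseteq> {n - pivot<..}" using pivot_bounds by force
  then have count: "boundary_count n e t = card {z \<in> x ` {j..<k}. z \<le> t} + card H"
    if "pivot - 1 \<le> t" "t \<le> pivot" for t
  proof -
    have "{z \<in> H. n < z + t} = H" using H that pivot_bounds by force
    then show ?thesis
      unfolding e_def H_def[symmetric] using that \<open>H \<subseteq> {n - pivot<..}\<close>
      by (simp add: boundary_count_edge H_def)
  qed
  have "card H = j"
    unfolding H_def using j m_le
    by (subst card_image_strict_mono[OF strict_mono_on_shift[OF strict_mono]]) auto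
  then have at_pivot: "boundary_count n e pivot = m"
    and below: "boundary_count n e (pivot - 1) < m"
    using j m_pos count[of pivot] count[of "pivot - 1"]
      card_enum_le_pivot[of j] card_enum_below_pivot[of j] by auto
  then show "threshold n m e = pivot" "boundary_count n e pivot = m"
    by (auto intro!: threshold_eqI simp: e_def)
  have "m - 1 \<in> {j..<k}" using j m_le by auto
  then show "pivot \<in> e" by (simp add: e_def)
  have low: "1 \<le> z \<and> z \<le> n - pivot" if "z \<in> x ` {j..<k}" for z
    using that enum_bounds by auto
  have "e = x ` {j..<k} \<union> H" by (simp add: e_def H_def)
  then show "n + 1 - pivot \<notin> e" "e \<subseteq> {1..n}"
    using pivot_bounds by (auto dest!: low H)
qed

lemma short_edge_threshold:
  assumes j: "j < m"
  defines "c \<equiv> n + 1 - x 0 - pivot"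
  defines "e \<equiv> x ` {j..<k} \<union> (\<lambda>q. x q + c) ` {0..<Suc j}"
  shows "threshold n m e = pivot" "m < boundary_count n e pivot"
proof -
  define H where "H = (\<lambda>q. x q + c) ` {0..<Suc j}"
  have H: "n + 1 - pivot \<le> z" if "z \<in> H" for z
    using that j short_shift_bounds(2)[folded c_def] by (auto simp: H_def)
  then have "H \<subseteq> {n - pivot<..}" using pivot_bounds by force
  then have count: "boundary_count n e t
      = card {z \<in> x ` {j..<k}. z \<le> t} + card {z \<in> H. n < z + t}" if "t \<le> pivot" for t
    unfolding e_def H_def[symmetric] using that by (simp add: boundary_count_edge H_def)
  have "{z \<in> H. n < z + pivot} = H" using H pivot_bounds by force
  moreover have "{z \<in> H. n < z + (pivot - 1)} = (\<lambda>q. x q + c) ` {1..<Suc j}"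
  proof -
    have "n < x q + c + (pivot - 1) \<longleftrightarrow> 0 < q" if "q < Suc j" for q
      using that j short_shift_bounds[of q, folded c_def] pivot_bounds
      by (cases "q = 0") (simp_all, arith)
    then have "{q \<in> {0..<Suc j}. n < x q + c + (pivot - 1)} = {1..<Suc j}" by auto
    then show ?thesis unfolding H_def by blast
  qed
  moreover have "card ((\<lambda>q. x q + c) ` {i..<Suc j}) = Suc j - i" for i
    using j m_le by (subst card_image_strict_mono[OF strict_mono_on_shift[OF strict_mono]]) auto
  ultimately have "boundary_count n e pivot = m + 1" "boundary_count n e (pivot - 1) < m"
    using j m_pos count[of pivot] count[of "pivot - 1"]
      card_enum_le_pivot[of j] card_enum_below_pivot[of j] by (simp_all add: H_def)
  then show "threshold n m e = pivot" "m < boundary_count n e pivot"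
    by (auto intro!: threshold_eqI simp: e_def)
qed

lemma short_edge_extrema:
  assumes j: "j < m"
  defines "c \<equiv> n + 1 - x 0 - pivot"
  defines "e \<equiv> x ` {j..<k} \<union> (\<lambda>q. x q + c) ` {0..<Suc j}"
  shows "Min e = x j" "Max e = x j + c"
proof -
  have low: "x j \<le> z \<and> z \<le> n - pivot" if "z \<in> x ` {j..<k}" for z
    using that enum_bounds(2) strict_mono_on_leD[OF strict_mono, of j] by auto
  have high: "n + 1 - pivot \<le> z \<and> z \<le> x j + c" if "z \<in> (\<lambda>q. x q + c) ` {0..<Suc j}" for z
    using that j m_le short_shift_bounds(2)[folded c_def] strict_mono_on_leD[OF strict_mono, of _ j]
    by auto
  have "j < k" using j m_le by simp
  then have "x j \<in> e" "x j \<le> n - pivot" using enum_bounds(2) by (auto simp: e_def)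
  moreover have "x j \<le> z" if "z \<in> e" for z
    using that high[of z] low[of z] \<open>x j \<le> n - pivot\<close> unfolding e_def by force
  ultimately show "Min e = x j" by (intro Min_eqI) (simp_all add: e_def)
  have "n + 1 - pivot \<le> x j + c" using short_shift_bounds(2)[OF j, folded c_def] .
  then have "z \<le> x j + c" if "z \<in> e" for z
    using that high[of z] low[of z] unfolding e_def by force
  moreover have "x j + c \<in> e" by (simp add: e_def)
  ultimately show "Max e = x j + c" by (intro Max_eqI) (simp_all add: e_def)
qed

lemma long_embedding_embeds:
  "strict_mono_on {0..<k + m - 1} (long_embedding n k m x)"
  "long_embedding n k m x ` {0..<k + m - 1} \<subseteq> {1..n}"
proof -
  have "x (k - 1) < x 0 + (n + 1 - pivot)"
    using enum_bounds[of "k - 1"] enum_bounds[of 0] m_pos m_le by auto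
  then show "strict_mono_on {0..<k + m - 1} (long_embedding n k m x)"
    using strict_mono_wrap[OF strict_mono, of "m - 1"] m_pos m_le
    by (simp add: long_embedding_def)
  have "long_embedding n k m x ` {0..<k + m - 1}
      = x ` {0..<k} \<union> (\<lambda>q. x q + (n + 1 - pivot)) ` {0..<m - 1}"
    using wrap_window[of 0 k "k + m - 1"] m_pos by (simp add: long_embedding_def)
  moreover have "(\<lambda>q. x q + (n + 1 - pivot)) ` {0..<m - 1} \<subseteq> {1..n}"
  proof (rule image_subsetI)
    fix q assume "q \<in> {0..<m - 1}"
    then show "x q + (n + 1 - pivot) \<in> {1..n}" using long_shift_bounds[of q] by auto
  qed
  ultimately show "long_embedding n k m x ` {0..<k + m - 1} \<subseteq> {1..n}"
    using range by simp
qed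

lemma short_embedding_embeds:
  "strict_mono_on {0..<k + m} (short_embedding n k m x)"
  "short_embedding n k m x ` {0..<k + m} \<subseteq> {1..n}"
proof -
  have "x (k - 1) < x 0 + (n + 1 - x 0 - pivot)"
    using enum_bounds(2)[of "k - 1"] short_shift_bounds(1)[of 0] m_pos m_le pivot_bounds by arith
  then show "strict_mono_on {0..<k + m} (short_embedding n k m x)"
    using strict_mono_wrap[OF strict_mono, of m] m_le by (simp add: short_embedding_def)
  have "short_embedding n k m x ` {0..<k + m}
      = x ` {0..<k} \<union> (\<lambda>q. x q + (n + 1 - x 0 - pivot)) ` {0..<m}"
    using wrap_window[of 0 k "k + m"] by (simp add: short_embedding_def)
  moreover have "(\<lambda>q. x q + (n + 1 - x 0 - pivot)) ` {0..<m} \<subseteq> {1..n}"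
  proof (rule image_subsetI)
    fix q assume "q \<in> {0..<m}"
    then have "n + 1 - pivot \<le> x q + (n + 1 - x 0 - pivot)" "x q + (n + 1 - x 0 - pivot) \<le> n"
      using short_shift_bounds(2,3)[of q] by auto
    moreover have "1 \<le> n + 1 - pivot" using pivot_bounds by simp
    ultimately show "x q + (n + 1 - x 0 - pivot) \<in> {1..n}"
      by (metis atLeastAtMost_iff order_trans)
  qed
  ultimately show "short_embedding n k m x ` {0..<k + m} \<subseteq> {1..n}"
    using range by simp
qed

lemma long_copy_edge:
  assumes "e \<in> path_copy k (k + m - 1) (long_embedding n k m x)"
  obtains j where "j < m" "e = x ` {j..<k} \<union> (\<lambda>q. x q + (n + 1 - pivot)) ` {0..<j}"
proof -
  obtain j where "j + k \<le> k + m - 1" "e = long_embedding n k m x ` {j..<j + k}"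
    using assms by (auto simp: path_copy_iff)
  moreover have "j < m" using calculation m_pos by linarith
  ultimately show ?thesis
    using that wrap_window[of j k k] m_le by (simp add: long_embedding_def)
qed

lemma short_copy_edge:
  assumes "e \<in> path_copy (k + 1) (k + m) (short_embedding n k m x)"
  obtains j where "j < m" "e = x ` {j..<k} \<union> (\<lambda>q. x q + (n + 1 - x 0 - pivot)) ` {0..<Suc j}"
proof -
  obtain j where "j + (k + 1) \<le> k + m" "e = short_embedding n k m x ` {j..<j + (k + 1)}"
    using assms by (auto simp: path_copy_iff)
  moreover have "j < m" using calculation by linarith
  ultimately show ?thesis
    using that wrap_window[of j k "k + 1"] m_le by (simp add: short_embedding_def)
qed

lemma decode_long_copy:
  assumes "e \<in> path_copy k (k + m - 1) (long_embedding n k m x)"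
  shows "decode n m e = (Plain, x ` {0..<k})"
    and "decode n m (reflect n ` e) = (Mirrored, x ` {0..<k})"
proof -
  obtain j where j: "j < m" and e: "e = x ` {j..<k} \<union> (\<lambda>q. x q + (n + 1 - pivot)) ` {0..<j}"
    using assms by (rule long_copy_edge)
  have "unwrap n pivot (n + 1 - pivot) e = x ` {0..<k}"
    using j m_le long_shift_bounds(1) pivot_bounds unfolding e
    by (subst unwrap_edge) (auto simp: enum_image_split)
  then show "decode n m e = (Plain, x ` {0..<k})"
    "decode n m (reflect n ` e) = (Mirrored, x ` {0..<k})"
    using long_edge[OF j] decode_reflect[of e n m pivot] by (simp_all add: decode_def e)
qed

lemma decode_short_copy:
  assumes "e \<in> path_copy (k + 1) (k + m) (short_embedding n k m x)"
  shows "decode n m e = (Short, x ` {0..<k})"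
proof -
  define c where "c = n + 1 - x 0 - pivot"
  obtain j where j: "j < m" and e: "e = x ` {j..<k} \<union> (\<lambda>q. x q + c) ` {0..<Suc j}"
    using assms unfolding c_def by (rule short_copy_edge)
  have "n - pivot < x q + c" if "q < Suc j" for q
    using that j short_shift_bounds(2)[of q, folded c_def] pivot_bounds by auto
  then have "unwrap n pivot c e = x ` {j..<k} \<union> x ` {0..<Suc j}"
    unfolding e by (rule unwrap_edge)
  also have "\<dots> = x ` {0..<k}" using j m_le by (simp add: enum_image_split)
  finally have "unwrap n pivot c e = x ` {0..<k}" .
  moreover have "threshold n m e = pivot" "m < boundary_count n e pivot" "Max e - Min e = c"
    using short_edge_threshold[OF j, folded c_def] short_edge_extrema[OF j, folded c_def]
    unfolding e by auto
  ultimately show ?thesis by (simp add: decode_def)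
qed

end

lemma biased_enum_sorted_enum:
  assumes S: "S \<subseteq> {1..n}" and biased: "left_biased n m S" and m: "1 \<le> m"
  shows "biased_enum n (card S) m (sorted_enum S)"
proof -
  let ?k = "card S" and ?x = "sorted_enum S"
  have "finite S" using S finite_subset by blast
  note mono = strict_mono_sorted_enum[OF this] and image = sorted_enum_image[OF this]
  obtain a b where "a \<le> b" "b \<le> n" "a = n - b" and X: "card ({1..a} \<inter> S) = m"
    and Z: "{b + 1..n} \<inter> S = {}"
    using biased unfolding left_biased_def by auto
  have "m \<le> ?k" using X \<open>finite S\<close> card_mono[of S "{1..a} \<inter> S"] by auto
  then have "?x (?k - 1) \<in> S" using m image by force
  then have "?x (?k - 1) \<le> n" "?x (?k - 1) \<notin> {b + 1..n}" using S Z by auto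
  then have top: "?x (?k - 1) \<le> b" by auto
  have bottom: "?x (m - 1) \<le> a"
  proof (rule ccontr)
    assume "\<not> ?x (m - 1) \<le> a"
    then have "{1..a} \<inter> S \<subseteq> {z \<in> ?x ` {0..<?k}. z < ?x (m - 1)}" using image by auto
    also have "\<dots> = ?x ` {0..<m - 1}"
      using \<open>m \<le> ?k\<close> m by (intro strict_mono_on_image_filter_less[OF mono]) auto
    finally have "m \<le> card (?x ` {0..<m - 1})" using X by (metis card_mono finite_imageI finite_atLeastLessThan)
    then show False using card_image_le[of "{0..<m - 1}" ?x] m by simp
  qed
  show ?thesis
    using mono image S \<open>m \<le> ?k\<close> m top bottom \<open>a = n - b\<close> \<open>b \<le> n\<close>
    by unfold_locales auto
qed

definition left_biased_sets :: "nat \<Rightarrow> nat \<Rightarrow> nat \<Rightarrow> nat set set" where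
  "left_biased_sets n t m = {S. S \<subseteq> {1..n} \<and> card S = t \<and> left_biased n m S}"

definition biased_copy :: "nat \<Rightarrow> nat \<Rightarrow> nat \<Rightarrow> nat \<Rightarrow> copy_kind \<times> nat set \<Rightarrow> nat set set" where
  "biased_copy n r s m p = path_copy r s
    (case p of
      (Plain, S) \<Rightarrow> long_embedding n r m (sorted_enum S)
    | (Mirrored, S) \<Rightarrow> mirror n s (long_embedding n r m (sorted_enum S))
    | (Short, T) \<Rightarrow> short_embedding n (r - 1) m (sorted_enum T))"

lemma long_biased_copies:
  assumes S: "S \<in> left_biased_sets n r m" and m: "1 \<le> m" and s: "s = r + m - 1"
    and kind: "kind \<in> {Plain, Mirrored}"
  shows "biased_copy n r s m (kind, S) \<in> copies n s (path_edges r s)"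
    and "e \<in> biased_copy n r s m (kind, S) \<Longrightarrow> decode n m e = (kind, S)"
proof -
  interpret biased_enum n r m "sorted_enum S"
    using S biased_enum_sorted_enum[of S n m] m by (auto simp: left_biased_sets_def)
  have "sorted_enum S ` {0..<r} = S"
    using S sorted_enum_image[of S] finite_subset by (fastforce simp: left_biased_sets_def)
  note embeds = long_embedding_embeds[folded s]
    and decode = decode_long_copy[folded s, unfolded this]
  have "biased_copy n r s m (kind, S) \<in> copies n s (path_edges r s) \<and>
      (\<forall>e \<in> biased_copy n r s m (kind, S). decode n m e = (kind, S))"
    using kind
  proof (cases kind)
    case Plain
    then show ?thesis
      using path_copy_in_copies[OF embeds] decode(1) by (simp add: biased_copy_def)
  next
    case Mirrored
    then show ?thesis
      using path_copy_in_copies[OF mirror_embedding[OF embeds]] decode(2)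
      by (auto simp: biased_copy_def path_copy_mirror)
  qed simp
  then show "biased_copy n r s m (kind, S) \<in> copies n s (path_edges r s)"
    and "e \<in> biased_copy n r s m (kind, S) \<Longrightarrow> decode n m e = (kind, S)" by auto
qed

lemma short_biased_copy:
  assumes T: "T \<in> left_biased_sets n (r - 1) m" and m: "1 \<le> m" and r: "1 \<le> r"
    and s: "s = r + m - 1"
  shows "biased_copy n r s m (Short, T) \<in> copies n s (path_edges r s)"
    and "e \<in> biased_copy n r s m (Short, T) \<Longrightarrow> decode n m e = (Short, T)"
proof -
  interpret biased_enum n "r - 1" m "sorted_enum T"
    using T biased_enum_sorted_enum[of T n m] m by (auto simp: left_biased_sets_def)
  have "sorted_enum T ` {0..<r - 1} = T"
    using T sorted_enum_image[of T] finite_subset by (fastforce simp: left_biased_sets_def)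
  moreover have "r - 1 + m = s" "r - 1 + 1 = r" using m r s by auto
  ultimately have "path_copy r s (short_embedding n (r - 1) m (sorted_enum T)) \<in> copies n s (path_edges r s)"
    and "e \<in> path_copy r s (short_embedding n (r - 1) m (sorted_enum T)) \<Longrightarrow> decode n m e = (Short, T)"
    using path_copy_in_copies[OF short_embedding_embeds] decode_short_copy by simp_all
  then show "biased_copy n r s m (Short, T) \<in> copies n s (path_edges r s)"
    and "e \<in> biased_copy n r s m (Short, T) \<Longrightarrow> decode n m e = (Short, T)"
    by (simp_all add: biased_copy_def)
qed

theorem theorem2p2:
  fixes n r s m :: nat
  assumes "even n" and "1 \<le> r" and "r \<le> s" and "s \<le> 2 * r - 1" and "m = s - r + 1"
  shows "nu n s (path_edges r s) \<ge> 2 * h n r m + h n (r - 1) m"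
proof -
  have m: "1 \<le> m" and s: "s = r + m - 1" using assms by auto
  define I where "I = {Plain, Mirrored} \<times> left_biased_sets n r m \<union> {Short} \<times> left_biased_sets n (r - 1) m"
  have "finite (left_biased_sets n t m)" for t
    unfolding left_biased_sets_def by (auto intro: finite_subset[of _ "Pow {1..n}"])
  then have "finite I" and "card I = 2 * h n r m + h n (r - 1) m"
    unfolding I_def h_def left_biased_sets_def[symmetric]
    by (simp, subst card_Un_disjoint) (auto simp: card_cartesian_product)
  moreover have "card I \<le> nu n s (path_edges r s)"
  proof (rule card_le_nu_if_decodable[where F = "biased_copy n r s m" and g = "decode n m"])
    have "{0..<r} \<in> path_edges r s"
      using assms(3) unfolding path_edges_def by (intro CollectI exI[of _ 0]) simp
    then show "path_edges r s \<noteq> {}" by blast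
    show "e \<subseteq> {0..<s}" if "e \<in> path_edges r s" for e using that by (auto simp: path_edges_def)
  qed (use \<open>finite I\<close> long_biased_copies[OF _ m s] short_biased_copy[OF _ m assms(2) s]
       in \<open>auto simp: I_def\<close>)
  ultimately show ?thesis by simp
qed

end
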